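(* Fix a policy $\pi$ and $0 \le \eta < 1$, and a random field $Z_0$. Define $Z_{t+1} = \mathcal{T}^{\pi,\eta} Z_t$ and $Z^0_{t+1} = \mathcal{T}^{\pi} Z^0_t$ for $t \ge 0$, with $Z^0_0 = Z_0$. Then for all $s\in\mathcal{S}$, $a\in\mathcal{A}$ and $t \ge 0$, $\mathbb{E}_z Z_t(s,a) \le \mathbb{E}_z Z^0_t(s,a)$.
   Context: Setting: a Markov decision process with state space $\mathcal{S}$, action space $\mathcal{A}$, kernel $p_{\text{env}}(\cdot\mid s,a)$ giving a joint law of reward $r$ and next state $s'$, stochastic policy $\pi(\cdot\mid s)$, discount $\gamma\in[0,1)$. A random field $Z$ assigns to each $(s,a)$ an integrable real random variable $Z(s,a)$ (only its law matters); $\mathbb{E}_z Z(s,a) = \mathbb{E}[Z(s,a)]$. Distributional Bellman operator: $[\mathcal{T}^\pi Z](s,a)$ has the law of $r+\gamma Z(s',a')$ with $(r,s')\sim p_{\text{env}}(\cdot\mid s,a)$, $a'\sim\pi(\cdot\mid s')$, $Z(s',a')$ drawn independently given $(r,s',a')$. For a real random variable $Z$ with continuous distribution function $F_Z$ and quantile function $F_Z^{-1}(u)=\inf\{z: F_Z(z)\ge u\}$, the truncation $\mathcal{S}^\eta(Z)$ has distribution function $F_Z(z)/(1-\eta)$ for $z \le F_Z^{-1}(1-\eta)$ and $1$ for $z > F_Z^{-1}(1-\eta)$; for a random field it is applied pointwise in $(s,a)$. The truncated operator is $\mathcal{T}^{\pi,\eta} = \mathcal{T}^\pi\circ\mathcal{S}^\eta$.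 Standing assumption: all random variables $Z_t(s,a)$ have continuous distribution functions so that the truncations are well defined. *)

theory Defs
  imports "HOL-Probability.Probability"
begin

text \<open>Random fields are represented by their laws: a random field assigns to each
  state-action pair (s,a) a (probability) measure on the reals, the law of Z(s,a).\<close>

type_synonym ('s, 'a) rfield = "'s \<times> 'a \<Rightarrow> real measure"

definition cdf_of :: "real measure \<Rightarrow> real \<Rightarrow> real" where
  "cdf_of M z = measure M {..z}"

text \<open>Quantile function F^{-1}(u) = inf {z. F z \<ge> u}, taken in the extended reals
  (it is +\<infinity> when the set is empty, e.g. u = 1 for unbounded support).\<close>
definition quantile_of :: "real measure \<Rightarrow> real \<Rightarrow> ereal" where
  "quantile_of M u = Inf (ereal ` {z. cdf_of M z \<ge> u})"

definition trunc_cdf :: "real \<Rightarrow> real measure \<Rightarrow> real \<Rightarrow> real" where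
  "trunc_cdf \<eta> M z =
     (if ereal z \<le> quantile_of M (1 - \<eta>) then cdf_of M z / (1 - \<eta>) else 1)"

definition truncate :: "real \<Rightarrow> real measure \<Rightarrow> real measure" where
  "truncate \<eta> M = interval_measure (trunc_cdf \<eta> M)"

definition truncate_field :: "real \<Rightarrow> ('s, 'a) rfield \<Rightarrow> ('s, 'a) rfield" where
  "truncate_field \<eta> Z = (\<lambda>sa. truncate \<eta> (Z sa))"

definition bellman ::
  "('s \<times> 'a \<Rightarrow> (real \<times> 's) measure) \<Rightarrow> ('s \<Rightarrow> 'a measure) \<Rightarrow> real
     \<Rightarrow> ('s, 'a) rfield \<Rightarrow> ('s, 'a) rfield" where
  "bellman penv pol \<gamma> Z = (\<lambda>sa. penv sa \<bind> (\<lambda>(r, s'). pol s' \<bind>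
       (\<lambda>a'. distr (Z (s', a')) borel (\<lambda>z. r + \<gamma> * z))))"

definition bellman_trunc ::
  "('s \<times> 'a \<Rightarrow> (real \<times> 's) measure) \<Rightarrow> ('s \<Rightarrow> 'a measure) \<Rightarrow> real \<Rightarrow> real
     \<Rightarrow> ('s, 'a) rfield \<Rightarrow> ('s, 'a) rfield" where
  "bellman_trunc penv pol \<gamma> \<eta> Z = bellman penv pol \<gamma> (truncate_field \<eta> Z)"

definition expect :: "real measure \<Rightarrow> real" where
  "expect M = integral\<^sup>L M (\<lambda>x. x)"

definition is_rfield :: "'s measure \<Rightarrow> 'a measure \<Rightarrow> ('s, 'a) rfield \<Rightarrow> bool" where
  "is_rfield S A Z \<longleftrightarrow> Z \<in> measurable (S \<Otimes>\<^sub>M A) (prob_algebra borel) \<and>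
     (\<forall>s\<in>space S. \<forall>a\<in>space A. integrable (Z (s, a)) (\<lambda>x. x))"

end

theory Submission
  imports Defs
begin

text \<open>For a continuous law with \<open>(1 - \<eta>)\<close>-quantile \<open>q\<close>, the truncation \<open>S\<^sup>\<eta>\<close> is the law
  conditioned on \<open>{x \<le> q}\<close>, whose mean is at most the original one. The Bellman operator
  maps means affinely with slope \<open>\<gamma> \<ge> 0\<close>, so it preserves the pointwise order of means, and
  the claim follows by induction on \<open>t\<close>.

  Nothing guarantees that the truncated field is a measurable kernel, so the iterated integrals
  cannot be formed directly. Instead one uses that binding a non-measurable kernel yields the
  null measure: since every iterate is a probability law, all kernels involved are measurable.\<close>

lemma emeasure_distr_not_measurable:
  assumes f: "f \<in> space M \<rightarrow> space N" and nm: "f \<notin> M \<rightarrow>\<^sub>M N"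
    and nz: "emeasure M (space M) \<noteq> 0"
  shows "emeasure (distr M N f) A = 0"
proof -
  let ?\<mu> = "\<lambda>A. emeasure M (f -` A \<inter> space M)"
  have sigma: "sigma_sets (space N) (sets N) = sets N"
    by (simp add: sets.sigma_sets_eq)
  have "\<not> measure_space (space N) (sets N) ?\<mu>"
  proof
    assume ms: "measure_space (space N) (sets N) ?\<mu>"
    have em: "emeasure (distr M N f) X = ?\<mu> X" if "X \<in> sets N" for X
      using ms that unfolding distr_def by (simp add: emeasure_measure_of_conv sigma)
    obtain B where B: "B \<in> sets N" "f -` B \<inter> space M \<notin> sets M"
      using nm f by (auto simp: measurable_def)
    have compl: "space M - (f -` (space N - B) \<inter> space M) = f -` B \<inter> space M"
      using f sets.sets_into_space[OF B(1)] by auto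
    have C: "f -` (space N - B) \<inter> space M \<notin> sets M"
    proof
      assume "f -` (space N - B) \<inter> space M \<in> sets M"
      then have "space M - (f -` (space N - B) \<inter> space M) \<in> sets M"
        by auto
      then show False
        using B(2) compl by simp
    qed
    have "emeasure (distr M N f) B + emeasure (distr M N f) (space N - B) =
          emeasure (distr M N f) (B \<union> (space N - B))"
      by (rule plus_emeasure) (use B in auto)
    also have "B \<union> (space N - B) = space N"
      using sets.sets_into_space[OF B(1)] by auto
    finally have "?\<mu> B + ?\<mu> (space N - B) = ?\<mu> (space N)"
      using B by (simp add: em)
    moreover have "?\<mu> B = 0" "?\<mu> (space N - B) = 0"
      using B C by (simp_all add: emeasure_notin_sets)
    moreover have "f -` space N \<inter> space M = space M"
      using f by auto
    ultimately show False
      using nz by simp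
  qed
  then show ?thesis
    unfolding distr_def by (simp add: emeasure_measure_of_conv sigma)
qed

lemma emeasure_bind_not_measurable:
  assumes M: "emeasure M (space M) \<noteq> 0"
    and K: "\<And>x. x \<in> space M \<Longrightarrow> K x \<in> space (subprob_algebra N)"
    and nm: "K \<notin> M \<rightarrow>\<^sub>M subprob_algebra N" and A: "A \<in> sets N"
  shows "emeasure (M \<bind> K) A = 0"
proof -
  have ne: "space M \<noteq> {}"
    using M by auto
  define x0 where "x0 = (SOME x. x \<in> space M)"
  have "x0 \<in> space M"
    using ne unfolding x0_def by (simp add: some_in_eq)
  then have "sets (K x0) = sets N"
    using K by (simp add: space_subprob_algebra)
  then have "subprob_algebra (K x0) = subprob_algebra N"
    by (rule subprob_algebra_cong)
  then have "emeasure (M \<bind> K) A = emeasure (join (distr M (subprob_algebra N) K)) A"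
    using ne by (simp add: bind_nonempty x0_def[symmetric])
  also have "\<dots> = (\<integral>\<^sup>+M'. emeasure M' A \<partial>distr M (subprob_algebra N) K)"
    by (rule emeasure_join) (use A in auto)
  also have "\<dots> = (\<integral>\<^sup>+M'. 0 \<partial>distr M (subprob_algebra N) K)"
    by (rule nn_integral_cong_AE, rule AE_I[of _ _ "space (distr M (subprob_algebra N) K)"])
      (use emeasure_distr_not_measurable[OF _ nm M] K in \<open>auto simp: Pi_iff\<close>)
  finally show ?thesis
    by simp
qed

lemma measurable_kernel_if_bind_nonzero:
  assumes M: "emeasure M (space M) \<noteq> 0"
    and K: "\<And>x. x \<in> space M \<Longrightarrow> K x \<in> space (subprob_algebra N)"
    and "emeasure (M \<bind> K) (space N) \<noteq> 0"
  shows "K \<in> M \<rightarrow>\<^sub>M subprob_algebra N"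
  using emeasure_bind_not_measurable[of M K N "space N"] assms by auto

lemma bind_in_space_subprob_algebra:
  assumes M: "prob_space M"
    and K: "\<And>x. x \<in> space M \<Longrightarrow> K x \<in> space (subprob_algebra N)"
    and N: "space N \<noteq> {}"
  shows "M \<bind> K \<in> space (subprob_algebra N)"
proof -
  have "space M \<noteq> {}"
    using M by (simp add: prob_space.not_empty)
  then have sets: "sets (M \<bind> K) = sets N"
    using K by (intro sets_bind) (auto simp: space_subprob_algebra)
  have "subprob_space (M \<bind> K)"
  proof (cases "K \<in> M \<rightarrow>\<^sub>M subprob_algebra N")
    case True
    then show ?thesis
      using M by (intro subprob_space_bind) (simp_all add: prob_space_imp_subprob_space)
  next
    case False
    have "emeasure (M \<bind> K) (space N) = 0"
      by (intro emeasure_bind_not_measurable) (use M K False in \<open>auto simp: prob_space.emeasure_space_1\<close>)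
    moreover have "space (M \<bind> K) = space N"
      using sets by (rule sets_eq_imp_space_eq)
    ultimately show ?thesis
      using N by (intro subprob_spaceI) auto
  qed
  then show ?thesis
    using sets by (simp add: space_subprob_algebra)
qed

lemma AE_emeasure_kernel_eq_1:
  assumes M: "prob_space M" and K[measurable]: "K \<in> M \<rightarrow>\<^sub>M subprob_algebra N"
    and MK: "prob_space (M \<bind> K)"
  shows "AE x in M. emeasure (K x) (space N) = 1"
proof -
  interpret M: prob_space M by fact
  define f where "f x = emeasure (K x) (space N)" for x
  have [measurable]: "f \<in> borel_measurable M"
    unfolding f_def by (rule measurable_compose[OF K measurable_emeasure_subprob_algebra]) simp
  have f_le_1: "f x \<le> 1" if "x \<in> space M" for x
  proof -
    have "subprob_space (K x)" "sets (K x) = sets N"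
      using measurable_space[OF K that] by (auto simp: space_subprob_algebra)
    then show ?thesis
      unfolding f_def by (metis subprob_space.emeasure_space_le_1 sets_eq_imp_space_eq)
  qed
  have "space (M \<bind> K) = space N"
    using measurable_space[OF K] M.not_empty by (intro space_bind) (auto simp: space_subprob_algebra)
  then have "emeasure (M \<bind> K) (space N) = 1"
    using MK by (metis prob_space.emeasure_space_1)
  then have int_f: "(\<integral>\<^sup>+x. f x \<partial>M) = 1"
    unfolding f_def using emeasure_bind[OF M.not_empty K, of "space N"] by simp
  have "(\<integral>\<^sup>+x. 1 - f x \<partial>M) = (\<integral>\<^sup>+x. 1 \<partial>M) - (\<integral>\<^sup>+x. f x \<partial>M)"
    by (rule nn_integral_diff) (use int_f f_le_1 in auto)
  also have "\<dots> = 0"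
    using int_f by (simp add: M.emeasure_space_1)
  finally have "AE x in M. 1 - f x = 0"
    by (subst (asm) nn_integral_0_iff_AE) auto
  then show ?thesis
    using AE_space by eventually_elim (metis f_le_1 antisym ennreal_minus_eq_0 f_def)
qed

lemma integral_enn2real_eq_nn_integral:
  assumes [measurable]: "f \<in> borel_measurable M" and fin: "(\<integral>\<^sup>+x. f x \<partial>M) \<noteq> \<infinity>"
  shows "integrable M (\<lambda>x. enn2real (f x))"
    and "(\<integral>x. enn2real (f x) \<partial>M) = enn2real (\<integral>\<^sup>+x. f x \<partial>M)"
proof -
  have "AE x in M. f x \<noteq> \<infinity>"
    using fin by (intro nn_integral_PInf_AE) auto
  then have eq: "(\<integral>\<^sup>+x. ennreal (enn2real (f x)) \<partial>M) = (\<integral>\<^sup>+x. f x \<partial>M)"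
    by (intro nn_integral_cong_AE) (auto simp: ennreal_enn2real_if)
  then show "integrable M (\<lambda>x. enn2real (f x))"
    using fin by (intro integrableI_nonneg) (auto simp: less_top)
  show "(\<integral>x. enn2real (f x) \<partial>M) = enn2real (\<integral>\<^sup>+x. f x \<partial>M)"
    using eq by (subst integral_eq_nn_integral) auto
qed

lemma expect_bind:
  assumes K[measurable]: "K \<in> M \<rightarrow>\<^sub>M subprob_algebra borel"
    and int: "integrable (M \<bind> K) (\<lambda>z. z)"
  shows "AE x in M. integrable (K x) (\<lambda>z. z)"
    and "integrable M (\<lambda>x. expect (K x))"
    and "expect (M \<bind> K) = (\<integral>x. expect (K x) \<partial>M)"
proof -
  define P where "P x = (\<integral>\<^sup>+z. ennreal z \<partial>K x)" for x
  define Q where "Q x = (\<integral>\<^sup>+z. ennreal (- z) \<partial>K x)" for x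
  have [measurable]: "P \<in> borel_measurable M" "Q \<in> borel_measurable M"
    unfolding P_def Q_def by measurable
  have bind_P: "(\<integral>\<^sup>+z. ennreal z \<partial>(M \<bind> K)) = (\<integral>\<^sup>+x. P x \<partial>M)"
    unfolding P_def by (rule nn_integral_bind[OF _ K]) measurable
  have bind_Q: "(\<integral>\<^sup>+z. ennreal (- z) \<partial>(M \<bind> K)) = (\<integral>\<^sup>+x. Q x \<partial>M)"
    unfolding Q_def by (rule nn_integral_bind[OF _ K]) measurable
  have fin: "(\<integral>\<^sup>+x. P x \<partial>M) \<noteq> \<infinity>" "(\<integral>\<^sup>+x. Q x \<partial>M) \<noteq> \<infinity>"
    using int bind_P bind_Q by (simp_all add: real_integrable_def)
  have "AE x in M. P x \<noteq> \<infinity>" "AE x in M. Q x \<noteq> \<infinity>"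
    by (rule nn_integral_PInf_AE, simp, fact fin)+
  then show ae: "AE x in M. integrable (K x) (\<lambda>z. z)"
    using AE_space
  proof eventually_elim
    case (elim x)
    then have "sets (K x) = sets borel"
      using measurable_space[OF K] by (simp add: space_subprob_algebra)
    then show ?case
      using elim by (simp add: real_integrable_def P_def Q_def measurable_cong_sets[of "K x" borel])
  qed
  have expect_eq: "AE x in M. expect (K x) = enn2real (P x) - enn2real (Q x)"
    using ae by eventually_elim (simp add: expect_def P_def Q_def real_lebesgue_integral_def)
  note int_P = integral_enn2real_eq_nn_integral[of P M] and int_Q = integral_enn2real_eq_nn_integral[of Q M]
  have int_PQ: "integrable M (\<lambda>x. enn2real (P x) - enn2real (Q x))"
    using int_P int_Q fin by auto
  have [measurable]: "(\<lambda>x. expect (K x)) \<in> borel_measurable M"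
    unfolding expect_def by measurable
  show "integrable M (\<lambda>x. expect (K x))"
    by (rule integrable_cong_AE_imp[OF int_PQ]) (use expect_eq in \<open>auto simp: eq_commute\<close>)
  have "expect (M \<bind> K) = enn2real (\<integral>\<^sup>+x. P x \<partial>M) - enn2real (\<integral>\<^sup>+x. Q x \<partial>M)"
    using int by (simp add: expect_def real_lebesgue_integral_def bind_P bind_Q)
  also have "\<dots> = (\<integral>x. enn2real (P x) - enn2real (Q x) \<partial>M)"
    using int_P int_Q fin by simp
  also have "\<dots> = (\<integral>x. expect (K x) \<partial>M)"
    using expect_eq by (intro integral_cong_AE) auto
  finally show "expect (M \<bind> K) = (\<integral>x. expect (K x) \<partial>M)" .
qed

definition cond_atMost :: "real measure \<Rightarrow> real \<Rightarrow> real measure" where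
  "cond_atMost M q = density M (\<lambda>x. indicator {..q} x / cdf M q)"

lemma cdf_of_eq_cdf: "cdf_of = cdf"
  by (simp add: fun_eq_iff cdf_of_def cdf_def)

lemma interval_measure_cdf:
  assumes "real_distribution N"
  shows "interval_measure (cdf N) = N"
proof -
  interpret N: real_distribution N by fact
  have "real_distribution (interval_measure (cdf N))" "cdf (interval_measure (cdf N)) = cdf N"
    using N.cdf_nondecreasing N.cdf_is_right_cont N.cdf_lim_at_bot N.cdf_lim_at_top_prob
    by (auto intro!: real_distribution_interval_measure cdf_interval_measure)
  then show ?thesis
    using cdf_unique[OF _ assms] by blast
qed

context real_distribution
begin

lemma emeasure_cond_atMost:
  assumes q: "0 < cdf M q" and A: "A \<in> sets borel"
  shows "emeasure (cond_atMost M q) A = ennreal (1 / cdf M q) * emeasure M ({..q} \<inter> A)"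
proof -
  have "emeasure (cond_atMost M q) A = (\<integral>\<^sup>+x. ennreal (indicator {..q} x / cdf M q) * indicator A x \<partial>M)"
    unfolding cond_atMost_def using A by (intro emeasure_density) auto
  also have "\<dots> = (\<integral>\<^sup>+x. ennreal (1 / cdf M q) * indicator ({..q} \<inter> A) x \<partial>M)"
    by (intro nn_integral_cong) (simp add: indicator_def)
  also have "\<dots> = ennreal (1 / cdf M q) * emeasure M ({..q} \<inter> A)"
    using A by (intro nn_integral_cmult_indicator) auto
  finally show ?thesis .
qed

lemma real_distribution_cond_atMost:
  assumes q: "0 < cdf M q"
  shows "real_distribution (cond_atMost M q)"
proof -
  have "emeasure (cond_atMost M q) UNIV = ennreal (1 / cdf M q) * ennreal (cdf M q)"
    using emeasure_cond_atMost[OF q, of UNIV] by (simp add: cdf_def emeasure_eq_measure)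
  also have "\<dots> = 1"
    using q by (simp add: ennreal_mult[symmetric])
  finally have "prob_space (cond_atMost M q)"
    by (intro prob_spaceI) (simp add: cond_atMost_def)
  then show ?thesis
    by (simp add: real_distribution_def real_distribution_axioms_def cond_atMost_def)
qed

lemma cdf_cond_atMost:
  assumes q: "0 < cdf M q"
  shows "cdf (cond_atMost M q) z = cdf M (min z q) / cdf M q"
proof -
  have "{..q} \<inter> {..z} = {..min z q}"
    by auto
  then have "emeasure (cond_atMost M q) {..z} = ennreal (1 / cdf M q) * ennreal (cdf M (min z q))"
    using emeasure_cond_atMost[OF q, of "{..z}"] by (simp add: cdf_def emeasure_eq_measure)
  also have "\<dots> = ennreal (cdf M (min z q) / cdf M q)"
    using q by (simp add: ennreal_mult[symmetric] cdf_nonneg)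
  finally show ?thesis
    using q by (simp add: cdf_def measure_def cdf_nonneg)
qed

text \<open>Since \<open>\<integral>(g - 1) = 0\<close> for the density \<open>g\<close>, the mean changes by \<open>\<integral>(g x - 1)(x - q)\<close>,
  and the integrand is \<open>\<le> 0\<close> because \<open>g \<ge> 1\<close> on \<open>{..q}\<close> and \<open>g = 0\<close> beyond.\<close>

lemma expect_cond_atMost_le:
  assumes int: "integrable M (\<lambda>x. x)" and q: "0 < cdf M q"
  shows "integrable (cond_atMost M q) (\<lambda>x. x)" and "expect (cond_atMost M q) \<le> expect M"
proof -
  define g where "g x = indicator {..q} x / cdf M q" for x :: real
  have g_nonneg: "0 \<le> g x" for x
    using q by (simp add: g_def)
  have [measurable]: "g \<in> borel_measurable M"
    unfolding g_def by measurable
  have int_gx: "integrable M (\<lambda>x. g x * x)"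
    using integrable_mult_indicator[of "{..q}" M "\<lambda>x. x / cdf M q"] int
    by (simp add: g_def mult.commute)
  then show "integrable (cond_atMost M q) (\<lambda>x. x)"
    unfolding cond_atMost_def g_def[symmetric] using g_nonneg by (subst integrable_density) auto
  have expect_cond: "expect (cond_atMost M q) = (\<integral>x. g x * x \<partial>M)"
    unfolding expect_def cond_atMost_def g_def[symmetric] using g_nonneg by (subst integral_density) auto
  have int_g: "integrable M g"
    unfolding g_def by (intro integrable_divide integrable_real_indicator) (auto simp: emeasure_eq_measure)
  have "(\<integral>x. g x \<partial>M) = 1"
    using q by (simp add: g_def cdf_def)
  then have mass: "(\<integral>x. q * (g x - 1) \<partial>M) = 0"
    using int_g prob_space by simp
  have "(\<integral>x. g x * x \<partial>M) - expect M = (\<integral>x. (g x - 1) * (x - q) + q * (g x - 1) \<partial>M)"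
    using int_gx int int_g by (simp add: expect_def algebra_simps)
  also have "\<dots> = (\<integral>x. (g x - 1) * (x - q) \<partial>M)"
    using int_gx int int_g mass by (simp add: algebra_simps)
  also have "\<dots> \<le> (\<integral>x. 0 \<partial>M)"
  proof (rule integral_mono)
    show "integrable M (\<lambda>x. (g x - 1) * (x - q))"
      using int_gx int int_g by (simp add: algebra_simps)
    show "(g x - 1) * (x - q) \<le> 0" for x
    proof (cases "x \<le> q")
      case True
      have "1 \<le> g x"
        using True q cdf_bounded_prob[of q] by (simp add: g_def)
      then show ?thesis
        using True by (simp add: mult_nonneg_nonpos)
    qed (simp add: g_def)
  qed simp
  finally show "expect (cond_atMost M q) \<le> expect M"
    using expect_cond by simp
qed

lemma cdf_Inf_level:
  assumes cont: "continuous_on UNIV (cdf M)" and u: "0 < u" and ne: "{z. u \<le> cdf M z} \<noteq> {}"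
  shows "bdd_below {z. u \<le> cdf M z}" and "cdf M (Inf {z. u \<le> cdf M z}) = u"
proof -
  let ?T = "{z. u \<le> cdf M z}"
  obtain z0 where z0: "\<And>z. z \<le> z0 \<Longrightarrow> cdf M z < u"
    using order_tendstoD(2)[OF cdf_lim_at_bot u] by (auto simp: eventually_at_bot_linorder)
  show bdd: "bdd_below ?T"
  proof (rule bdd_belowI)
    fix x
    assume "x \<in> ?T"
    then show "z0 \<le> x"
      using z0[of x] by force
  qed
  have "closed ?T"
    using cont by (intro closed_Collect_le) auto
  then have "Inf ?T \<in> ?T"
    using ne bdd by (intro closed_contains_Inf)
  then have "u \<le> cdf M (Inf ?T)"
    by simp
  moreover have "cdf M (Inf ?T) \<le> u"
  proof (rule tendsto_upperbound)
    show "(cdf M \<longlongrightarrow> cdf M (Inf ?T)) (at_left (Inf ?T))"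
      using cont by (simp add: continuous_on_eq_continuous_at isCont_def filterlim_at_split)
    have below: "cdf M z \<le> u" if "z < Inf ?T" for z
      using cInf_lower[OF _ bdd, of z] that by force
    show "eventually (\<lambda>z. cdf M z \<le> u) (at_left (Inf ?T))"
      by (intro eventually_mono[OF eventually_at_left_real[of "Inf ?T - 1"]]) (auto intro: below)
  qed simp
  ultimately show "cdf M (Inf ?T) = u"
    by simp
qed

end

lemma truncate_eq_cond_atMost:
  assumes M: "real_distribution M" and cont: "continuous_on UNIV (cdf M)" and \<eta>: "\<eta> < 1"
    and ne: "{z. 1 - \<eta> \<le> cdf M z} \<noteq> {}"
  shows "truncate \<eta> M = cond_atMost M (Inf {z. 1 - \<eta> \<le> cdf M z})"
proof -
  interpret real_distribution M by fact
  define q where "q = Inf {z. 1 - \<eta> \<le> cdf M z}"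
  have bdd: "bdd_below {z. 1 - \<eta> \<le> cdf M z}" and cdf_q: "cdf M q = 1 - \<eta>"
    using cdf_Inf_level[OF cont _ ne] \<eta> by (simp_all add: q_def)
  have "quantile_of M (1 - \<eta>) = ereal q"
    unfolding quantile_of_def q_def cdf_of_eq_cdf ereal_Inf'[OF bdd ne] by simp
  then have "trunc_cdf \<eta> M = cdf (cond_atMost M q)"
    using \<eta> cdf_q by (auto simp: fun_eq_iff trunc_cdf_def cdf_of_eq_cdf cdf_cond_atMost min_def)
  then show ?thesis
    using \<eta> cdf_q unfolding truncate_def q_def[symmetric]
    by (simp add: interval_measure_cdf real_distribution_cond_atMost)
qed

lemma truncate_eq_self:
  assumes M: "real_distribution M" and \<eta>: "0 \<le> \<eta>" and empty: "{z. 1 - \<eta> \<le> cdf M z} = {}"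
  shows "truncate \<eta> M = M"
proof -
  interpret real_distribution M by fact
  have "\<not> 1 - \<eta> < 1"
  proof
    assume "1 - \<eta> < 1"
    then obtain z where "1 - \<eta> < cdf M z"
      using order_tendstoD(1)[OF cdf_lim_at_top_prob] by (meson eventually_at_top_linorder order.refl)
    then show False
      using empty less_imp_le by blast
  qed
  then have "\<eta> = 0"
    using \<eta> by simp
  moreover have "quantile_of M 1 = \<top>"
    using empty \<open>\<eta> = 0\<close> by (simp add: quantile_of_def cdf_of_eq_cdf)
  ultimately have "trunc_cdf \<eta> M = cdf M"
    by (simp add: fun_eq_iff trunc_cdf_def cdf_of_eq_cdf)
  then show ?thesis
    by (simp add: truncate_def interval_measure_cdf[OF M])
qed

lemma truncate_mean_le:
  assumes M: "M \<in> space (prob_algebra borel)" and int: "integrable M (\<lambda>x. x)"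
    and cont: "continuous_on UNIV (cdf_of M)" and \<eta>: "0 \<le> \<eta>" "\<eta> < 1"
  shows "truncate \<eta> M \<in> space (prob_algebra borel)" and "integrable (truncate \<eta> M) (\<lambda>x. x)"
    and "expect (truncate \<eta> M) \<le> expect M"
proof -
  have "real_distribution M"
    using M by (auto simp: space_prob_algebra real_distribution_def real_distribution_axioms_def)
  then interpret real_distribution M .
  consider "truncate \<eta> M = M" | q where "0 < cdf M q" "truncate \<eta> M = cond_atMost M q"
  proof (cases "{z. 1 - \<eta> \<le> cdf M z} = {}")
    case True
    then show ?thesis
      using that(1) truncate_eq_self[OF real_distribution_axioms \<eta>(1)] by blast
  next
    case False
    show ?thesis
    proof (rule that(2))
      show "0 < cdf M (Inf {z. 1 - \<eta> \<le> cdf M z})"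
        using cdf_Inf_level(2)[OF _ _ False] cont \<eta> by (simp add: cdf_of_eq_cdf)
      show "truncate \<eta> M = cond_atMost M (Inf {z. 1 - \<eta> \<le> cdf M z})"
        using truncate_eq_cond_atMost[OF real_distribution_axioms _ \<eta>(2) False] cont
        by (simp add: cdf_of_eq_cdf)
    qed
  qed
  note cases = this
  have cond: "cond_atMost M q \<in> space (prob_algebra borel)" if "0 < cdf M q" for q
    using real_distribution_cond_atMost[OF that]
    by (auto simp: space_prob_algebra real_distribution_def real_distribution_axioms_def)
  show "truncate \<eta> M \<in> space (prob_algebra borel)"
    using cases by cases (simp_all add: M cond)
  show "integrable (truncate \<eta> M) (\<lambda>x. x)"
    using cases by cases (simp_all add: int expect_cond_atMost_le(1)[OF int])
  show "expect (truncate \<eta> M) \<le> expect M"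
    using cases by cases (simp_all add: expect_cond_atMost_le(2)[OF int])
qed

definition integrable_laws :: "'s measure \<Rightarrow> 'a measure \<Rightarrow> ('s, 'a) rfield \<Rightarrow> bool" where
  "integrable_laws S A W \<longleftrightarrow> (\<forall>s\<in>space S. \<forall>a\<in>space A.
     W (s, a) \<in> space (prob_algebra borel) \<and> integrable (W (s, a)) (\<lambda>x. x))"

lemma integrable_laws_if_is_rfield: "is_rfield S A Z \<Longrightarrow> integrable_laws S A Z"
  unfolding is_rfield_def integrable_laws_def
  by (auto intro: measurable_space simp: space_pair_measure)

definition bellman_next :: "('s \<Rightarrow> 'a measure) \<Rightarrow> real \<Rightarrow> ('s, 'a) rfield \<Rightarrow> real \<times> 's \<Rightarrow> real measure" where
  "bellman_next pol \<gamma> W = (\<lambda>(r, s'). pol s' \<bind> (\<lambda>a'. distr (W (s', a')) borel (\<lambda>z. r + \<gamma> * z)))"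

lemma bellman_eq_bind: "bellman penv pol \<gamma> W sa = penv sa \<bind> bellman_next pol \<gamma> W"
  by (simp add: bellman_def bellman_next_def)

lemma distr_affine_in_space_subprob_algebra:
  fixes r \<gamma> :: real
  assumes "W \<in> space (prob_algebra borel)"
  shows "distr W borel (\<lambda>z. r + \<gamma> * z) \<in> space (subprob_algebra borel)"
proof -
  have "prob_space W" and sets: "sets W = sets borel"
    using assms by (auto simp: space_prob_algebra)
  moreover have "(\<lambda>z. r + \<gamma> * z) \<in> W \<rightarrow>\<^sub>M borel"
    unfolding measurable_cong_sets[OF sets refl] by measurable
  ultimately show ?thesis
    by (simp add: space_subprob_algebra prob_space.prob_space_distr prob_space_imp_subprob_space)
qed

lemma expect_distr_affine:
  fixes r \<gamma> :: real
  assumes W: "W \<in> space (prob_algebra borel)" and int: "integrable W (\<lambda>x::real. x)"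
  shows "expect (distr W borel (\<lambda>z. r + \<gamma> * z)) = r + \<gamma> * expect W"
proof -
  interpret prob_space W
    using W by (simp add: space_prob_algebra)
  have sets: "sets W = sets borel"
    using W by (simp add: space_prob_algebra)
  have affine: "(\<lambda>z. r + \<gamma> * z) \<in> W \<rightarrow>\<^sub>M borel"
    unfolding measurable_cong_sets[OF sets refl] by measurable
  have "expect (distr W borel (\<lambda>z. r + \<gamma> * z)) = (\<integral>z. r + \<gamma> * z \<partial>W)"
    unfolding expect_def by (rule integral_distr[OF affine]) measurable
  also have "\<dots> = r + \<gamma> * expect W"
    using int by (simp add: expect_def prob_space)
  finally show ?thesis .
qed

lemma prob_kernel_apply:
  assumes "K \<in> S \<rightarrow>\<^sub>M prob_algebra A" "s \<in> space S"
  shows "prob_space (K s)" and "space (K s) = space A"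
  using measurable_space[OF assms] sets_eq_imp_space_eq[of "K s" A] by (simp_all add: space_prob_algebra)

lemma bellman_next_in_space_subprob_algebra:
  assumes pol: "pol \<in> S \<rightarrow>\<^sub>M prob_algebra A" and W: "integrable_laws S A W" and s': "s' \<in> space S"
  shows "bellman_next pol \<gamma> W (r, s') \<in> space (subprob_algebra borel)"
  unfolding bellman_next_def case_prod_conv
proof (rule bind_in_space_subprob_algebra)
  show "prob_space (pol s')"
    using prob_kernel_apply[OF pol s'] by simp
  show "distr (W (s', a')) borel (\<lambda>z. r + \<gamma> * z) \<in> space (subprob_algebra borel)"
    if "a' \<in> space (pol s')" for a'
    using distr_affine_in_space_subprob_algebra W s' that prob_kernel_apply[OF pol s']
    by (simp add: integrable_laws_def)
qed simp

lemma expect_bellman_next: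
  assumes pol: "pol \<in> S \<rightarrow>\<^sub>M prob_algebra A" and W: "integrable_laws S A W" and s': "s' \<in> space S"
    and nonzero: "emeasure (bellman_next pol \<gamma> W (r, s')) UNIV \<noteq> 0"
    and int: "integrable (bellman_next pol \<gamma> W (r, s')) (\<lambda>x. x)"
  shows "integrable (pol s') (\<lambda>a'. r + \<gamma> * expect (W (s', a')))"
    and "expect (bellman_next pol \<gamma> W (r, s')) = (\<integral>a'. r + \<gamma> * expect (W (s', a')) \<partial>pol s')"
proof -
  define N where "N a' = distr (W (s', a')) borel (\<lambda>z. r + \<gamma> * z)" for a'
  interpret prob_space "pol s'"
    using prob_kernel_apply[OF pol s'] by simp
  have space_pol: "space (pol s') = space A"
    using prob_kernel_apply[OF pol s'] by simp
  have laws: "W (s', a') \<in> space (prob_algebra borel)" "integrable (W (s', a')) (\<lambda>x. x)"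
    if "a' \<in> space (pol s')" for a'
    using W s' that space_pol by (auto simp: integrable_laws_def)
  have N: "N a' \<in> space (subprob_algebra borel)" if "a' \<in> space (pol s')" for a'
    unfolding N_def using laws(1)[OF that] by (rule distr_affine_in_space_subprob_algebra)
  have bind_N: "bellman_next pol \<gamma> W (r, s') = pol s' \<bind> N"
    by (simp add: bellman_next_def N_def[abs_def])
  have "N \<in> pol s' \<rightarrow>\<^sub>M subprob_algebra borel"
    using nonzero N by (intro measurable_kernel_if_bind_nonzero) (simp_all add: bind_N emeasure_space_1)
  note expect_N = expect_bind[OF this int[unfolded bind_N]]
  have expect_N_eq: "expect (N a') = r + \<gamma> * expect (W (s', a'))" if "a' \<in> space (pol s')" for a'
    unfolding N_def using laws[OF that] by (rule expect_distr_affine)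
  show "integrable (pol s') (\<lambda>a'. r + \<gamma> * expect (W (s', a')))"
    using expect_N(2) expect_N_eq by (simp cong: Bochner_Integration.integrable_cong)
  show "expect (bellman_next pol \<gamma> W (r, s')) = (\<integral>a'. r + \<gamma> * expect (W (s', a')) \<partial>pol s')"
    using expect_N(3) expect_N_eq by (simp add: bind_N cong: Bochner_Integration.integral_cong)
qed

lemma expect_bellman:
  assumes penv: "penv sa \<in> space (prob_algebra (borel \<Otimes>\<^sub>M S))"
    and pol: "pol \<in> S \<rightarrow>\<^sub>M prob_algebra A" and W: "integrable_laws S A W"
    and B: "bellman penv pol \<gamma> W sa \<in> space (prob_algebra borel)"
      "integrable (bellman penv pol \<gamma> W sa) (\<lambda>x. x)"
  shows "integrable (penv sa) (\<lambda>\<omega>. expect (bellman_next pol \<gamma> W \<omega>))"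
    and "expect (bellman penv pol \<gamma> W sa) = (\<integral>\<omega>. expect (bellman_next pol \<gamma> W \<omega>) \<partial>penv sa)"
    and "AE \<omega> in penv sa. snd \<omega> \<in> space S
      \<and> integrable (pol (snd \<omega>)) (\<lambda>a'. fst \<omega> + \<gamma> * expect (W (snd \<omega>, a')))
      \<and> expect (bellman_next pol \<gamma> W \<omega>) = (\<integral>a'. fst \<omega> + \<gamma> * expect (W (snd \<omega>, a')) \<partial>pol (snd \<omega>))"
proof -
  interpret prob_space "penv sa"
    using penv by (simp add: space_prob_algebra)
  have space_penv: "space (penv sa) = UNIV \<times> space S"
    using penv sets_eq_imp_space_eq[of "penv sa" "borel \<Otimes>\<^sub>M S"]
    by (simp add: space_prob_algebra space_pair_measure)
  have K: "bellman_next pol \<gamma> W \<omega> \<in> space (subprob_algebra borel)" if "\<omega> \<in> space (penv sa)" for \<omega>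
    using that space_penv bellman_next_in_space_subprob_algebra[OF pol W] by auto
  have bind_prob: "prob_space (penv sa \<bind> bellman_next pol \<gamma> W)"
    using B(1) by (simp add: space_prob_algebra bellman_eq_bind)
  moreover have "space (penv sa \<bind> bellman_next pol \<gamma> W) = space borel"
    using K not_empty by (intro space_bind) (auto simp: space_subprob_algebra)
  ultimately have "bellman_next pol \<gamma> W \<in> penv sa \<rightarrow>\<^sub>M subprob_algebra borel"
    using K by (intro measurable_kernel_if_bind_nonzero) (auto simp: emeasure_space_1 dest: prob_space.emeasure_space_1)
  note K_meas = this and expect_K = expect_bind[OF this B(2)[unfolded bellman_eq_bind]]
  show "integrable (penv sa) (\<lambda>\<omega>. expect (bellman_next pol \<gamma> W \<omega>))"
    by (fact expect_K(2))
  show "expect (bellman penv pol \<gamma> W sa) = (\<integral>\<omega>. expect (bellman_next pol \<gamma> W \<omega>) \<partial>penv sa)"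
    using expect_K(3) by (simp add: bellman_eq_bind)
  show "AE \<omega> in penv sa. snd \<omega> \<in> space S
      \<and> integrable (pol (snd \<omega>)) (\<lambda>a'. fst \<omega> + \<gamma> * expect (W (snd \<omega>, a')))
      \<and> expect (bellman_next pol \<gamma> W \<omega>) = (\<integral>a'. fst \<omega> + \<gamma> * expect (W (snd \<omega>, a')) \<partial>pol (snd \<omega>))"
    using AE_emeasure_kernel_eq_1[OF prob_space_axioms K_meas bind_prob] expect_K(1) AE_space
  proof eventually_elim
    case (elim \<omega>)
    obtain r s' where \<omega>: "\<omega> = (r, s')" and s': "s' \<in> space S"
      using elim(3) space_penv by auto
    then show ?case
      using expect_bellman_next[OF pol W s', of \<gamma> r] elim by simp
  qed
qed

lemma expect_bellman_mono:
  assumes penv: "penv sa \<in> space (prob_algebra (borel \<Otimes>\<^sub>M S))"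
    and pol: "pol \<in> S \<rightarrow>\<^sub>M prob_algebra A" and \<gamma>: "0 \<le> \<gamma>"
    and W: "integrable_laws S A W" and W': "integrable_laws S A W'"
    and le: "\<And>s a. s \<in> space S \<Longrightarrow> a \<in> space A \<Longrightarrow> expect (W (s, a)) \<le> expect (W' (s, a))"
    and B: "bellman penv pol \<gamma> W sa \<in> space (prob_algebra borel)"
      "integrable (bellman penv pol \<gamma> W sa) (\<lambda>x. x)"
    and B': "bellman penv pol \<gamma> W' sa \<in> space (prob_algebra borel)"
      "integrable (bellman penv pol \<gamma> W' sa) (\<lambda>x. x)"
  shows "expect (bellman penv pol \<gamma> W sa) \<le> expect (bellman penv pol \<gamma> W' sa)"
proof -
  note E = expect_bellman[OF penv pol W B] and E' = expect_bellman[OF penv pol W' B']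
  have "(\<integral>\<omega>. expect (bellman_next pol \<gamma> W \<omega>) \<partial>penv sa) \<le> (\<integral>\<omega>. expect (bellman_next pol \<gamma> W' \<omega>) \<partial>penv sa)"
  proof (rule integral_mono_AE[OF E(1) E'(1)])
    show "AE \<omega> in penv sa. expect (bellman_next pol \<gamma> W \<omega>) \<le> expect (bellman_next pol \<gamma> W' \<omega>)"
      using E(3) E'(3)
    proof eventually_elim
      case (elim \<omega>)
      have "(\<integral>a'. fst \<omega> + \<gamma> * expect (W (snd \<omega>, a')) \<partial>pol (snd \<omega>))
          \<le> (\<integral>a'. fst \<omega> + \<gamma> * expect (W' (snd \<omega>, a')) \<partial>pol (snd \<omega>))"
        using elim le \<gamma> prob_kernel_apply(2)[OF pol]
        by (intro integral_mono) (auto intro: mult_left_mono)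
      then show ?case
        using elim by simp
    qed
  qed
  then show ?thesis
    using E(2) E'(2) by simp
qed

lemma integrable_laws_truncate_field:
  assumes Z: "integrable_laws S A Z"
    and cont: "\<And>s a. s \<in> space S \<Longrightarrow> a \<in> space A \<Longrightarrow> continuous_on UNIV (cdf_of (Z (s, a)))"
    and \<eta>: "0 \<le> \<eta>" "\<eta> < 1"
  shows "integrable_laws S A (truncate_field \<eta> Z)"
    and "\<forall>s\<in>space S. \<forall>a\<in>space A. expect (truncate_field \<eta> Z (s, a)) \<le> expect (Z (s, a))"
  using truncate_mean_le[OF _ _ cont \<eta>] Z by (auto simp: integrable_laws_def truncate_field_def)

theorem lemma10:
  fixes S :: "'s measure" and A :: "'a measure"
    and penv :: "'s \<times> 'a \<Rightarrow> (real \<times> 's) measure"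
    and pol :: "'s \<Rightarrow> 'a measure"
    and \<gamma> \<eta> :: real
    and Zinit :: "('s, 'a) rfield"
    and Z Z0 :: "nat \<Rightarrow> ('s, 'a) rfield"
  assumes gamma: "0 \<le> \<gamma>" "\<gamma> < 1"
    and eta: "0 \<le> \<eta>" "\<eta> < 1"
    and penv: "penv \<in> measurable (S \<Otimes>\<^sub>M A) (prob_algebra (borel \<Otimes>\<^sub>M S))"
    and pol: "pol \<in> measurable S (prob_algebra A)"
    and Z_0: "Z 0 = Zinit" and Z_Suc: "\<And>t. Z (Suc t) = bellman_trunc penv pol \<gamma> \<eta> (Z t)"
    and Z0_0: "Z0 0 = Zinit" and Z0_Suc: "\<And>t. Z0 (Suc t) = bellman penv pol \<gamma> (Z0 t)"
    and Z_field: "\<And>t. is_rfield S A (Z t)"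
    and Z0_field: "\<And>t. is_rfield S A (Z0 t)"
    and Z_cont: "\<And>t s a. s \<in> space S \<Longrightarrow> a \<in> space A \<Longrightarrow> continuous_on UNIV (cdf_of (Z t (s, a)))"
  shows "\<forall>t. \<forall>s\<in>space S. \<forall>a\<in>space A. expect (Z t (s, a)) \<le> expect (Z0 t (s, a))"
proof
  fix t
  show "\<forall>s\<in>space S. \<forall>a\<in>space A. expect (Z t (s, a)) \<le> expect (Z0 t (s, a))"
  proof (induction t)
    case 0
    show ?case
      by (simp add: Z_0 Z0_0)
  next
    case (Suc t)
    note laws = integrable_laws_if_is_rfield[OF Z_field] integrable_laws_if_is_rfield[OF Z0_field]
    note trunc = integrable_laws_truncate_field[OF laws(1) Z_cont[where t = t] eta]
    have le: "expect (truncate_field \<eta> (Z t) (s, a)) \<le> expect (Z0 t (s, a))"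
      if "s \<in> space S" "a \<in> space A" for s a
      using trunc(2) Suc.IH that by fastforce
    show ?case
    proof (intro ballI)
      fix s a
      assume sa: "s \<in> space S" "a \<in> space A"
      then have "penv (s, a) \<in> space (prob_algebra (borel \<Otimes>\<^sub>M S))"
        using measurable_space[OF penv] by (simp add: space_pair_measure)
      then show "expect (Z (Suc t) (s, a)) \<le> expect (Z0 (Suc t) (s, a))"
        unfolding Z_Suc Z0_Suc bellman_trunc_def
        using laws(1)[of "Suc t"] laws(2)[of "Suc t"] sa
        by (intro expect_bellman_mono[OF _ pol gamma(1) trunc(1) laws(2) le])
          (simp_all add: integrable_laws_def Z_Suc Z0_Suc bellman_trunc_def)
    qed
  qed
qed

end
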